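(* Let $I\subset S$ be a proper graded ideal and let $f\in S$ be a homogeneous element with $f\notin I$. Then $\mathrm{v}(I)\le\mathrm{v}(I:f)+\deg(f)$.
   Context: $S=K[x_1,\dots,x_n]$ is a standard graded polynomial ring over a field $K$, $S_d$ its degree-$d$ component. For a proper graded ideal $J\subset S$, $\mathrm{v}(J)=\min\{d:\exists f\in S_d\text{ with }(J:f)\in\operatorname{Ass}(J)\}$. *)

theory Defs
  imports "HOL-Library.Poly_Mapping"
begin

text \<open>The polynomial ring S = K[x_v | v in 'v] over a field K, with a finite type
 'v (n = CARD('v)).\<close>

type_synonym ('v, 'k) mpoly = "('v \<Rightarrow>\<^sub>0 nat) \<Rightarrow>\<^sub>0 'k"

definition mdeg :: "('v \<Rightarrow>\<^sub>0 nat) \<Rightarrow> nat" where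
  "mdeg m = (\<Sum>i\<in>Poly_Mapping.keys m. Poly_Mapping.lookup m i)"

definition homog_comp_set :: "nat \<Rightarrow> ('v, 'k::zero) mpoly set" where
  "homog_comp_set d = {p. \<forall>m\<in>Poly_Mapping.keys p. mdeg m = d}"

definition hcomp :: "nat \<Rightarrow> ('v, 'k::zero) mpoly \<Rightarrow> ('v, 'k) mpoly" where
  "hcomp d p = Abs_poly_mapping (\<lambda>m. if mdeg m = d then Poly_Mapping.lookup p m else 0)"

definition is_ideal :: "'a::comm_ring_1 set \<Rightarrow> bool" where
  "is_ideal I \<longleftrightarrow> 0 \<in> I \<and> (\<forall>a\<in>I. \<forall>b\<in>I. a + b \<in> I) \<and> (\<forall>a\<in>I. \<forall>r. r * a \<in> I)"

definition is_prime_ideal :: "'a::comm_ring_1 set \<Rightarrow> bool" where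
  "is_prime_ideal P \<longleftrightarrow> is_ideal P \<and> P \<noteq> UNIV \<and> (\<forall>a b. a * b \<in> P \<longrightarrow> a \<in> P \<or> b \<in> P)"

definition graded_ideal :: "('v, 'k::comm_ring_1) mpoly set \<Rightarrow> bool" where
  "graded_ideal I \<longleftrightarrow> is_ideal I \<and> (\<forall>p\<in>I. \<forall>d. hcomp d p \<in> I)"

definition colon :: "'a::comm_ring_1 set \<Rightarrow> 'a \<Rightarrow> 'a set" where
  "colon J f = {g. g * f \<in> J}"

definition Ass :: "'a::comm_ring_1 set \<Rightarrow> 'a set set" where
  "Ass J = {P. is_prime_ideal P \<and> (\<exists>g. P = colon J g)}"

definition v_number :: "('v, 'k::comm_ring_1) mpoly set \<Rightarrow> nat" where
  "v_number J = (LEAST d. \<exists>f\<in>homog_comp_set d. colon J f \<in> Ass J)"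

end

(*
  If h is homogeneous of degree v(I:f) with ((I:f):h) associated to (I:f), then
  (I:hf) = ((I:f):h) is associated to I and hf is homogeneous of degree v(I:f) + deg f.

  The substance is that v(I:f) is attained at all, i.e. that a proper graded ideal J has an
  associated prime with a homogeneous witness.  Among the colon ideals (J:g), g homogeneous and
  g \<notin> J, there is a maximal one because ideals of K[x] satisfy the ascending chain condition
  (Dickson's lemma for leading monomials in a degree-compatible monomial order), and a maximal
  one is prime because a graded ideal is prime once it is prime on homogeneous elements.
*)

theory Submission
  imports Complex_Main Defs "HOL-Library.Countable" "HOL-Library.FuncSet"
begin

section \<open>Monomials and homogeneous components\<close>

lemma mdeg_eq_sum:
  assumes "finite S" and "Poly_Mapping.keys m \<subseteq> S"
  shows "mdeg m = (\<Sum>i\<in>S. Poly_Mapping.lookup m i)"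
  unfolding mdeg_def using assms
  by (intro sum.mono_neutral_left) (auto simp: in_keys_iff)

lemma mdeg_add: "mdeg (a + b) = mdeg a + mdeg b"
proof -
  let ?S = "Poly_Mapping.keys a \<union> Poly_Mapping.keys b"
  have "mdeg (a + b) = (\<Sum>i\<in>?S. Poly_Mapping.lookup (a + b) i)"
    by (rule mdeg_eq_sum) (auto simp: in_keys_iff lookup_add)
  also have "\<dots> = mdeg a + mdeg b"
    by (simp add: lookup_add sum.distrib mdeg_eq_sum[of ?S])
  finally show ?thesis .
qed

lemma finite_mdeg_le: "finite {m :: 'v::finite \<Rightarrow>\<^sub>0 nat. mdeg m \<le> D}"
proof -
  have bounded: "Poly_Mapping.lookup m v \<le> D" if "mdeg m \<le> D" for m :: "'v \<Rightarrow>\<^sub>0 nat" and v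
  proof -
    have "Poly_Mapping.lookup m v \<le> (\<Sum>i\<in>UNIV. Poly_Mapping.lookup m i)"
      by (rule member_le_sum) auto
    also have "\<dots> = mdeg m"
      by (simp add: mdeg_eq_sum[of UNIV])
    finally show ?thesis using that by simp
  qed
  have "Poly_Mapping.lookup ` {m :: 'v \<Rightarrow>\<^sub>0 nat. mdeg m \<le> D} \<subseteq> Pi\<^sub>E UNIV (\<lambda>_. {..D})"
    by (auto simp: bounded)
  then have "finite (Poly_Mapping.lookup ` {m :: 'v \<Rightarrow>\<^sub>0 nat. mdeg m \<le> D})"
    by (rule finite_subset) (simp add: finite_PiE)
  then show ?thesis
    by (rule finite_imageD) (auto simp: inj_on_def intro: poly_mapping_eqI)
qed

lemma lookup_hcomp:
  "Poly_Mapping.lookup (hcomp d p) m = (if mdeg m = d then Poly_Mapping.lookup p m else 0)"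
proof -
  have "finite {m. (if mdeg m = d then Poly_Mapping.lookup p m else 0) \<noteq> 0}"
    by (rule finite_subset[of _ "Poly_Mapping.keys p"]) (auto simp: in_keys_iff)
  then show ?thesis
    unfolding hcomp_def by simp
qed

lemma hcomp_in_homog_comp_set: "hcomp d p \<in> homog_comp_set d"
  unfolding homog_comp_set_def by (auto simp: in_keys_iff lookup_hcomp split: if_splits)

lemma hcomp_homog:
  "x \<in> homog_comp_set d \<Longrightarrow> hcomp d' x = (if d' = d then x else 0)"
  unfolding homog_comp_set_def
  by (intro poly_mapping_eqI) (auto simp: lookup_hcomp in_keys_iff)

lemma hcomp_sum: "hcomp d (sum f A) = (\<Sum>x\<in>A. hcomp d (f x))"
  for f :: "_ \<Rightarrow> ('v, 'k::comm_monoid_add) mpoly"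
  by (rule poly_mapping_eqI) (simp add: lookup_hcomp lookup_sum)

lemma homog_comp_set_mult:
  fixes a b :: "('v, 'k::comm_semiring_1) mpoly"
  assumes "a \<in> homog_comp_set i" and "b \<in> homog_comp_set j"
  shows "a * b \<in> homog_comp_set (i + j)"
  unfolding homog_comp_set_def mem_Collect_eq
proof
  fix m assume "m \<in> Poly_Mapping.keys (a * b)"
  then obtain x y where "x \<in> Poly_Mapping.keys a" "y \<in> Poly_Mapping.keys b" "m = x + y"
    using keys_mult[of a b] by blast
  with assms show "mdeg m = i + j"
    unfolding homog_comp_set_def by (simp add: mdeg_add)
qed

lemma one_in_homog_comp_set: "(1 :: ('v, 'k::comm_semiring_1) mpoly) \<in> homog_comp_set 0"
  unfolding homog_comp_set_def by (simp add: mdeg_def)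

definition hdegrees :: "('v, 'k::zero) mpoly \<Rightarrow> nat set" where
  "hdegrees p = mdeg ` Poly_Mapping.keys p"

definition lead_form :: "('v, 'k::zero) mpoly \<Rightarrow> ('v, 'k) mpoly" where
  "lead_form p = hcomp (Max (hdegrees p)) p"

lemma finite_hdegrees [simp]: "finite (hdegrees p)"
  unfolding hdegrees_def by simp

lemma hdegrees_empty_iff [simp]: "hdegrees p = {} \<longleftrightarrow> p = 0"
  unfolding hdegrees_def by simp

lemma hcomp_notin_hdegrees: "d \<notin> hdegrees p \<Longrightarrow> hcomp d p = 0"
  unfolding hdegrees_def by (intro poly_mapping_eqI) (auto simp: lookup_hcomp in_keys_iff)

lemma sum_hcomp: "(\<Sum>d\<in>hdegrees p. hcomp d p) = p"
  for p :: "('v, 'k::comm_monoid_add) mpoly"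
proof (rule poly_mapping_eqI)
  fix m
  have "Poly_Mapping.lookup (\<Sum>d\<in>hdegrees p. hcomp d p) m
      = (if mdeg m \<in> hdegrees p then Poly_Mapping.lookup p m else 0)"
    by (simp add: lookup_sum lookup_hcomp)
  also have "\<dots> = Poly_Mapping.lookup p m"
    unfolding hdegrees_def by (auto simp: in_keys_iff)
  finally show "Poly_Mapping.lookup (\<Sum>d\<in>hdegrees p. hcomp d p) m = Poly_Mapping.lookup p m" .
qed

lemma hcomp_mult_homog:
  fixes p g :: "('v, 'k::comm_semiring_1) mpoly"
  assumes g: "g \<in> homog_comp_set e"
  shows "hcomp (d + e) (p * g) = hcomp d p * g"
proof -
  have "hcomp (d + e) (p * g) = (\<Sum>i\<in>hdegrees p. hcomp (d + e) (hcomp i p * g))"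
    by (subst sum_hcomp[of p, symmetric]) (simp add: sum_distrib_right hcomp_sum)
  also have "\<dots> = (\<Sum>i\<in>hdegrees p. if d = i then hcomp i p * g else 0)"
    by (intro sum.cong) (auto simp: hcomp_homog[OF homog_comp_set_mult[OF hcomp_in_homog_comp_set g]])
  also have "\<dots> = hcomp d p * g"
    using hcomp_notin_hdegrees[of d p] by simp
  finally show ?thesis .
qed

lemma hcomp_top_mult:
  fixes a b :: "('v, 'k::comm_semiring_1) mpoly"
  assumes "a \<noteq> 0" and "b \<noteq> 0"
  shows "hcomp (Max (hdegrees a) + Max (hdegrees b)) (a * b) = lead_form a * lead_form b"
proof -
  define ta tb where "ta = Max (hdegrees a)" and "tb = Max (hdegrees b)"
  let ?D = "hdegrees a \<times> hdegrees b"
  have top: "(ta, tb) \<in> ?D"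
    using assms by (simp add: ta_def tb_def)
  have "a * b = (\<Sum>z\<in>?D. hcomp (fst z) a * hcomp (snd z) b)"
    by (subst (1 2) sum_hcomp[symmetric])
      (simp add: sum_product sum.cartesian_product split_def)
  then have "hcomp (ta + tb) (a * b)
      = (\<Sum>z\<in>?D. hcomp (ta + tb) (hcomp (fst z) a * hcomp (snd z) b))"
    by (simp add: hcomp_sum)
  also have "\<dots> = (\<Sum>z\<in>?D. if (ta, tb) = z then hcomp (fst z) a * hcomp (snd z) b else 0)"
  proof (rule sum.cong[OF refl])
    fix z assume z: "z \<in> ?D"
    then have "fst z \<le> ta" "snd z \<le> tb"
      unfolding ta_def tb_def by (auto intro: Max_ge)
    then have "fst z + snd z = ta + tb \<longleftrightarrow> (ta, tb) = z"
      by (cases z) auto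
    then show "hcomp (ta + tb) (hcomp (fst z) a * hcomp (snd z) b)
        = (if (ta, tb) = z then hcomp (fst z) a * hcomp (snd z) b else 0)"
      by (auto simp: hcomp_homog[OF homog_comp_set_mult[OF hcomp_in_homog_comp_set hcomp_in_homog_comp_set]])
  qed
  also have "\<dots> = lead_form a * lead_form b"
    using top by (simp add: lead_form_def ta_def tb_def)
  finally show ?thesis
    by (simp add: ta_def tb_def)
qed

lemma card_keys_diff_lead_form:
  fixes a :: "('v, 'k::ab_group_add) mpoly"
  assumes "a \<noteq> 0"
  shows "card (Poly_Mapping.keys (a - lead_form a)) < card (Poly_Mapping.keys a)"
proof (rule psubset_card_mono)
  have "Max (hdegrees a) \<in> hdegrees a"
    using assms by simp
  then obtain m where "m \<in> Poly_Mapping.keys a" "mdeg m = Max (hdegrees a)"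
    unfolding hdegrees_def by auto
  then show "Poly_Mapping.keys (a - lead_form a) \<subset> Poly_Mapping.keys a"
    by (auto simp: in_keys_iff lookup_minus lookup_hcomp lead_form_def split: if_splits)
qed simp

section \<open>Ideals, colon ideals and a primality test for graded ideals\<close>

lemma is_ideal_zero: "is_ideal I \<Longrightarrow> 0 \<in> I"
  unfolding is_ideal_def by blast

lemma is_ideal_add: "is_ideal I \<Longrightarrow> a \<in> I \<Longrightarrow> b \<in> I \<Longrightarrow> a + b \<in> I"
  unfolding is_ideal_def by blast

lemma is_ideal_mult: "is_ideal I \<Longrightarrow> a \<in> I \<Longrightarrow> r * a \<in> I"
  unfolding is_ideal_def by blast

lemma is_ideal_diff: "is_ideal I \<Longrightarrow> a \<in> I \<Longrightarrow> b \<in> I \<Longrightarrow> a - b \<in> I"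
  unfolding is_ideal_def by (metis diff_conv_add_uminus mult_minus1)

lemma is_ideal_diff_iff: "is_ideal I \<Longrightarrow> b \<in> I \<Longrightarrow> a - b \<in> I \<longleftrightarrow> a \<in> I"
  by (metis is_ideal_add is_ideal_diff diff_add_cancel)

lemma mult_diff_mem_ideal: "is_ideal I \<Longrightarrow> a * b \<in> I \<Longrightarrow> c \<in> I \<Longrightarrow> (a - c) * b \<in> I"
  by (metis is_ideal_diff is_ideal_mult left_diff_distrib mult.commute)

lemma is_ideal_colon: "is_ideal J \<Longrightarrow> is_ideal (colon J g)"
  unfolding is_ideal_def colon_def by (auto simp: algebra_simps)

lemma colon_colon: "colon (colon J f) g = colon J (g * f)"
  unfolding colon_def by (simp add: mult.assoc)

lemma graded_ideal_colon:
  fixes J :: "('v, 'k::comm_ring_1) mpoly set"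
  assumes "graded_ideal J" and "g \<in> homog_comp_set e"
  shows "graded_ideal (colon J g)"
  unfolding graded_ideal_def
proof (intro conjI ballI allI)
  show "is_ideal (colon J g)"
    using assms(1) by (simp add: graded_ideal_def is_ideal_colon)
  fix p d assume "p \<in> colon J g"
  then have "hcomp (d + e) (p * g) \<in> J"
    using assms(1) unfolding colon_def graded_ideal_def by blast
  then show "hcomp d p \<in> colon J g"
    unfolding colon_def hcomp_mult_homog[OF assms(2)] by simp
qed

text \<open>Induction on the total number of terms: a factor whose top component lies in \<open>Q\<close>
  can be replaced by the factor with that component removed.\<close>
lemma is_prime_ideal_if_homogeneous_prime:
  fixes Q :: "('v, 'k::comm_ring_1) mpoly set"
  assumes "graded_ideal Q" and "Q \<noteq> UNIV"
    and homog_prime: "\<And>x y i j. x \<in> homog_comp_set i \<Longrightarrow> y \<in> homog_comp_set j \<Longrightarrow>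
      x * y \<in> Q \<Longrightarrow> x \<in> Q \<or> y \<in> Q"
  shows "is_prime_ideal Q"
proof -
  have Q: "is_ideal Q"
    using assms(1) by (simp add: graded_ideal_def)
  have "a \<in> Q \<or> b \<in> Q"
    if "card (Poly_Mapping.keys a) + card (Poly_Mapping.keys b) = n" and "a * b \<in> Q" for n a b
    using that
  proof (induction n arbitrary: a b rule: less_induct)
    case (less n)
    show ?case
    proof (cases "a = 0 \<or> b = 0")
      case True
      then show ?thesis
        using is_ideal_zero[OF Q] by auto
    next
      case False
      then have "lead_form a * lead_form b \<in> Q"
        using less.prems(2) assms(1) hcomp_top_mult[of a b] unfolding graded_ideal_def by metis
      then have "lead_form a \<in> Q \<or> lead_form b \<in> Q"
        unfolding lead_form_def by (rule homog_prime[OF hcomp_in_homog_comp_set hcomp_in_homog_comp_set])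
      then show ?thesis
      proof
        assume A: "lead_form a \<in> Q"
        have "(a - lead_form a) * b \<in> Q"
          using less.prems(2) A by (rule mult_diff_mem_ideal[OF Q])
        moreover have "card (Poly_Mapping.keys (a - lead_form a)) + card (Poly_Mapping.keys b) < n"
          using card_keys_diff_lead_form False less.prems(1) by fastforce
        ultimately show ?thesis
          using less.IH is_ideal_diff_iff[OF Q A] by blast
      next
        assume B: "lead_form b \<in> Q"
        have "(b - lead_form b) * a \<in> Q"
          using less.prems(2) B by (intro mult_diff_mem_ideal[OF Q]) (simp_all add: mult.commute)
        moreover have "card (Poly_Mapping.keys a) + card (Poly_Mapping.keys (b - lead_form b)) < n"
          using card_keys_diff_lead_form False less.prems(1) by fastforce
        ultimately show ?thesis
          using less.IH is_ideal_diff_iff[OF Q B] by (metis mult.commute)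
      qed
    qed
  qed
  then show ?thesis
    using Q assms(2) unfolding is_prime_ideal_def by blast
qed

section \<open>Ascending chains of ideals\<close>

lemma nat_seq_incseq_subseq:
  fixes g :: "nat \<Rightarrow> nat"
  obtains r :: "nat \<Rightarrow> nat" where "strict_mono r" and "incseq (g \<circ> r)"
proof -
  obtain f :: "nat \<Rightarrow> nat" where f: "strict_mono f" "monoseq (g \<circ> f)"
    using seq_monosub[of g] by (auto simp: o_def)
  show thesis
  proof (cases "incseq (g \<circ> f)")
    case True
    then show thesis using f(1) that by blast
  next
    case False
    then have dec: "decseq (g \<circ> f)"
      using f(2) by (simp add: monoseq_iff)
    \<comment> \<open>A non-increasing sequence of naturals is constant from the index of its minimum on.\<close>
    obtain N where N: "\<And>n. g (f N) \<le> g (f n)"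
      using ex_has_least_nat[of "\<lambda>_. True" _ "g \<circ> f"] by auto
    have "(g \<circ> f \<circ> (\<lambda>n. n + N)) n = g (f N)" for n
      using N[of "n + N"] decseqD[OF dec, of N "n + N"] by simp
    then have "incseq (g \<circ> (f \<circ> (\<lambda>n. n + N)))"
      by (simp add: incseq_def o_assoc)
    moreover have "strict_mono (f \<circ> (\<lambda>n. n + N))"
      using f(1) by (simp add: strict_mono_def)
    ultimately show thesis
      using that by blast
  qed
qed

lemma incseq_lookup_subseq:
  fixes s :: "nat \<Rightarrow> ('v \<Rightarrow>\<^sub>0 nat)"
  assumes "finite V"
  obtains r :: "nat \<Rightarrow> nat"
  where "strict_mono r" and "\<And>v. v \<in> V \<Longrightarrow> incseq (\<lambda>n. Poly_Mapping.lookup (s (r n)) v)"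
  using assms
proof (induction V arbitrary: thesis rule: finite_induct)
  case empty
  show ?case
    using empty(1)[of id] by (simp add: strict_mono_def)
next
  case (insert w V)
  obtain r where r: "strict_mono r" "\<And>v. v \<in> V \<Longrightarrow> incseq (\<lambda>n. Poly_Mapping.lookup (s (r n)) v)"
    using insert.IH by blast
  obtain r' where r': "strict_mono r'" "incseq ((\<lambda>n. Poly_Mapping.lookup (s (r n)) w) \<circ> r')"
    by (rule nat_seq_incseq_subseq)
  have "incseq (\<lambda>n. Poly_Mapping.lookup (s ((r \<circ> r') n)) v)" if "v \<in> insert w V" for v
  proof (cases "v = w")
    case True
    then show ?thesis using r'(2) by (simp add: o_def)
  next
    case False
    then have "incseq (\<lambda>n. Poly_Mapping.lookup (s (r n)) v)"
      using that r(2) by simp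
    then show ?thesis
      using r'(1) by (auto simp: incseq_def strict_mono_less_eq)
  qed
  moreover have "strict_mono (r \<circ> r')"
    using r(1) r'(1) by (simp add: strict_mono_def)
  ultimately show ?case
    using insert.prems by blast
qed

lemma dickson:
  fixes s :: "nat \<Rightarrow> ('v::finite \<Rightarrow>\<^sub>0 nat)"
  obtains i j t where "i < j" and "s j = t + s i"
proof -
  obtain r :: "nat \<Rightarrow> nat"
    where r: "strict_mono r" "\<And>v. incseq (\<lambda>n. Poly_Mapping.lookup (s (r n)) v)"
    using incseq_lookup_subseq[where V = UNIV and s = s] by auto
  have "s (r 1) = (s (r 1) - s (r 0)) + s (r 0)"
    by (rule poly_mapping_eqI) (simp add: lookup_add lookup_minus incseqD[OF r(2)])
  moreover have "r 0 < r 1"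
    using r(1) by (simp add: strict_mono_def)
  ultimately show thesis
    using that by blast
qed

text \<open>The lexicographic order on \<open>key m\<close>, which lists the degree of \<open>m\<close> followed by its
  exponents, is a degree-compatible monomial order on \<open>'v \<Rightarrow>\<^sub>0 nat\<close>.\<close>
definition key :: "('v::finite \<Rightarrow>\<^sub>0 nat) \<Rightarrow> (nat \<Rightarrow>\<^sub>0 nat)" where
  "key m = Poly_Mapping.single 0 (mdeg m)
     + (\<Sum>v\<in>UNIV. Poly_Mapping.single (Suc (to_nat v)) (Poly_Mapping.lookup m v))"

lemma key_add: "key (a + b) = key a + key b"
  by (simp add: key_def mdeg_add lookup_add single_add sum.distrib algebra_simps)

lemma lookup_key_0: "Poly_Mapping.lookup (key m) 0 = mdeg m"
  by (simp add: key_def lookup_add lookup_sum lookup_single)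

lemma lookup_key_Suc: "Poly_Mapping.lookup (key m) (Suc (to_nat v)) = Poly_Mapping.lookup m v"
proof -
  have "Poly_Mapping.lookup (key m) (Suc (to_nat v))
      = (\<Sum>w\<in>UNIV. if w = v then Poly_Mapping.lookup m w else 0)"
    by (auto simp: key_def lookup_add lookup_sum lookup_single when_def intro: sum.cong)
  then show ?thesis
    by simp
qed

lemma inj_key: "inj key"
  by (rule injI, rule poly_mapping_eqI) (metis lookup_key_Suc)

lemma mdeg_le_if_key_less:
  assumes "key a < key b"
  shows "mdeg a \<le> mdeg b"
proof -
  obtain k where k: "Poly_Mapping.lookup (key a) k < Poly_Mapping.lookup (key b) k"
    "\<And>k'. k' < k \<Longrightarrow> Poly_Mapping.lookup (key a) k' = Poly_Mapping.lookup (key b) k'"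
    using assms by (auto simp: less_poly_mapping.rep_eq less_fun_def)
  then show ?thesis
    by (cases "k = 0") (auto simp: lookup_key_0 dest: k(2)[of 0])
qed

lemma wf_key_less: "wf {(a, b). key a < key (b :: 'v::finite \<Rightarrow>\<^sub>0 nat)}"
proof (rule wf_finite_segments)
  show "irrefl {(a, b). key a < key b}" "trans {(a, b). key a < key b}"
    by (auto simp: irrefl_def trans_def)
  show "finite {a. (a, b) \<in> {(a, b). key a < key b}}" for b :: "'v \<Rightarrow>\<^sub>0 nat"
    by (rule finite_subset[OF _ finite_mdeg_le[of "mdeg b"]]) (auto dest: mdeg_le_if_key_less)
qed

definition lead_monom :: "('v::finite, 'k::zero) mpoly \<Rightarrow> ('v \<Rightarrow>\<^sub>0 nat)" where
  "lead_monom p = inv key (Max (key ` Poly_Mapping.keys p))"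

lemma lead_monom:
  assumes "p \<noteq> 0"
  shows lead_monom_in_keys: "lead_monom p \<in> Poly_Mapping.keys p"
    and key_lead_monom: "key (lead_monom p) = Max (key ` Poly_Mapping.keys p)"
proof -
  have "Max (key ` Poly_Mapping.keys p) \<in> key ` Poly_Mapping.keys p"
    using assms by (intro Max_in) auto
  then obtain m where m: "m \<in> Poly_Mapping.keys p" "key m = Max (key ` Poly_Mapping.keys p)"
    by auto
  then have "lead_monom p = m"
    unfolding lead_monom_def by (metis inv_f_f[OF inj_key])
  with m show "lead_monom p \<in> Poly_Mapping.keys p" "key (lead_monom p) = Max (key ` Poly_Mapping.keys p)"
    by simp_all
qed

lemma key_le_lead_monom: "m \<in> Poly_Mapping.keys p \<Longrightarrow> key m \<le> key (lead_monom p)"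
  using key_lead_monom[of p] by fastforce

lemma lookup_single_mult:
  fixes p :: "('a::cancel_comm_monoid_add, 'k::comm_semiring_1) poly_mapping"
  shows "Poly_Mapping.lookup (Poly_Mapping.single t c * p) (t + m) = c * Poly_Mapping.lookup p m"
  by (simp add: lookup_mult lookup_single when_mult)

lemma key_lead_monom_reduce:
  fixes p q :: "('v::finite, 'k::comm_ring_1) mpoly"
  assumes "q \<noteq> 0" and lm: "lead_monom p = t + lead_monom q"
    and c: "c * Poly_Mapping.lookup q (lead_monom q) = Poly_Mapping.lookup p (lead_monom p)"
    and r: "p - Poly_Mapping.single t c * q \<noteq> 0"
  shows "key (lead_monom (p - Poly_Mapping.single t c * q)) < key (lead_monom p)"
proof -
  let ?r = "p - Poly_Mapping.single t c * q"
  have "key m < key (lead_monom p)" if m: "m \<in> Poly_Mapping.keys ?r" for m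
  proof -
    have "m \<in> Poly_Mapping.keys p \<or> m \<in> Poly_Mapping.keys (Poly_Mapping.single t c * q)"
      using m by (auto simp: in_keys_iff lookup_minus)
    then have "key m \<le> key (lead_monom p)"
    proof
      assume "m \<in> Poly_Mapping.keys (Poly_Mapping.single t c * q)"
      then obtain b where "b \<in> Poly_Mapping.keys q" "m = t + b"
        using keys_mult[of "Poly_Mapping.single t c" q] by (auto split: if_splits)
      then show ?thesis
        using lm key_le_lead_monom[of b q] by (simp add: key_add)
    qed (rule key_le_lead_monom)
    moreover have "m \<noteq> lead_monom p"
      using m by (auto simp: in_keys_iff lookup_minus lm lookup_single_mult c)
    ultimately show ?thesis
      by (metis injD[OF inj_key] order_le_neq_trans)
  qed
  then show ?thesis
    using lead_monom_in_keys[OF r] by blast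
qed

lemma ex_min_lead_monom:
  fixes D :: "('v::finite, 'k::zero) mpoly set"
  assumes "D \<noteq> {}"
  obtains p where "p \<in> D" and "\<And>q. q \<in> D \<Longrightarrow> key (lead_monom p) \<le> key (lead_monom q)"
proof -
  obtain x where "x \<in> D"
    using assms by blast
  then obtain m where m: "m \<in> lead_monom ` D"
    and min: "\<And>m'. (m', m) \<in> {(a, b). key a < key b} \<Longrightarrow> m' \<notin> lead_monom ` D"
    using wfE_min[OF wf_key_less, of "lead_monom x" "lead_monom ` D"] by blast
  show thesis
  proof (rule that)
    show "inv_into D lead_monom m \<in> D"
      using m by (rule inv_into_into)
    show "key (lead_monom (inv_into D lead_monom m)) \<le> key (lead_monom q)" if "q \<in> D" for q
      using min[of "lead_monom q"] that m by (force simp: f_inv_into_f)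
  qed
qed

text \<open>Choose in each step of a strictly ascending chain a new element with least leading
  monomial; by Dickson's lemma one of these leading monomials divides a later one, and reducing
  the later element by the earlier one gives a new element with smaller leading monomial.\<close>
lemma wf_ideal_strict_supset:
  "wf {(A, B). B \<subset> A \<and> is_ideal A \<and> is_ideal (B :: ('v::finite, 'k::field) mpoly set)}"
proof (rule ccontr)
  assume "\<not> ?thesis"
  then obtain C :: "nat \<Rightarrow> ('v, 'k) mpoly set"
    where C: "\<And>k. is_ideal (C k)" "\<And>k. C k \<subset> C (Suc k)"
    unfolding wf_iff_no_infinite_down_chain by blast
  have mono: "C a \<subseteq> C b" if "a \<le> b" for a b
    using lift_Suc_mono_le[of C, OF _ that] C(2) by blast
  define D where "D k = C (Suc k) - C k" for k
  have nonzero: "q \<noteq> 0" if "q \<in> D k" for q k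
    using that is_ideal_zero[OF C(1)] unfolding D_def by auto
  obtain p where p: "\<And>k. p k \<in> D k"
    and p_min: "\<And>k q. q \<in> D k \<Longrightarrow> key (lead_monom (p k)) \<le> key (lead_monom q)"
  proof -
    have "\<forall>k. \<exists>x \<in> D k. \<forall>q \<in> D k. key (lead_monom x) \<le> key (lead_monom q)"
    proof
      fix k
      have "D k \<noteq> {}"
        using C(2)[of k] unfolding D_def by blast
      then show "\<exists>x \<in> D k. \<forall>q \<in> D k. key (lead_monom x) \<le> key (lead_monom q)"
        by (rule ex_min_lead_monom) blast
    qed
    then show thesis
      using that by metis
  qed
  obtain i j t where ij: "i < j" and lm: "lead_monom (p j) = t + lead_monom (p i)"
    using dickson[of "\<lambda>k. lead_monom (p k)"] by blast
  define c where "c = Poly_Mapping.lookup (p j) (lead_monom (p j)) / Poly_Mapping.lookup (p i) (lead_monom (p i))"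
  define q where "q = p j - Poly_Mapping.single t c * p i"
  have pi: "p i \<in> C j"
    using p[of i] mono[of "Suc i" j] ij unfolding D_def by auto
  then have "Poly_Mapping.single t c * p i \<in> C j" "Poly_Mapping.single t c * p i \<in> C (Suc j)"
    using is_ideal_mult[OF C(1)] mono[of j "Suc j"] by auto
  then have q: "q \<in> D j"
    using p[of j] unfolding D_def q_def by (auto simp: is_ideal_diff_iff[OF C(1)])
  have "c * Poly_Mapping.lookup (p i) (lead_monom (p i)) = Poly_Mapping.lookup (p j) (lead_monom (p j))"
    using lead_monom_in_keys[OF nonzero[OF p]] by (simp add: c_def in_keys_iff)
  then have "key (lead_monom q) < key (lead_monom (p j))"
    unfolding q_def using nonzero[OF p] nonzero[OF q] lm by (intro key_lead_monom_reduce) (auto simp: q_def)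
  then show False
    using p_min[OF q] by simp
qed

section \<open>Associated primes and the v-number\<close>

lemma Ass_colon_subset: "Ass (colon J f) \<subseteq> Ass J"
  unfolding Ass_def by (auto simp: colon_colon)

text \<open>A maximal member of \<open>{J : g | g homogeneous, g \<notin> J}\<close> exists by the ascending chain
  condition and is prime.\<close>
lemma ex_homogeneous_Ass:
  fixes J :: "('v::finite, 'k::field) mpoly set"
  assumes J: "graded_ideal J" and "1 \<notin> J"
  obtains e g where "g \<in> homog_comp_set e" and "colon J g \<in> Ass J"
proof -
  have ideal_J: "is_ideal J"
    using J by (simp add: graded_ideal_def)
  define F where "F = {colon J g | g. (\<exists>e. g \<in> homog_comp_set e) \<and> g \<notin> J}"
  have "colon J 1 \<in> F"
    unfolding F_def using assms(2) one_in_homog_comp_set by blast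
  then obtain Q where "Q \<in> F"
    and max: "\<And>A. (A, Q) \<in> {(A, B). B \<subset> A \<and> is_ideal A \<and> is_ideal B} \<Longrightarrow> A \<notin> F"
    using wfE_min[OF wf_ideal_strict_supset \<open>colon J 1 \<in> F\<close>] by blast
  then obtain g e where Q: "Q = colon J g" and g: "g \<in> homog_comp_set e" "g \<notin> J"
    unfolding F_def by blast
  have "is_prime_ideal Q"
  proof (rule is_prime_ideal_if_homogeneous_prime)
    show "graded_ideal Q"
      unfolding Q by (rule graded_ideal_colon[OF J g(1)])
    have "1 \<notin> Q"
      using g(2) by (simp add: Q colon_def)
    then show "Q \<noteq> UNIV"
      by blast
    show "x \<in> Q \<or> y \<in> Q"
      if x: "x \<in> homog_comp_set i" and "y \<in> homog_comp_set j" and xy: "x * y \<in> Q" for x y i j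
    proof (cases "x \<in> Q")
      case False
      then have "colon J (x * g) \<in> F"
        unfolding F_def Q colon_def using homog_comp_set_mult[OF x g(1)] by (auto simp: ac_simps)
      moreover have "Q \<subseteq> colon J (x * g)"
      proof
        fix h assume "h \<in> Q"
        then have "x * (h * g) \<in> J"
          unfolding Q colon_def by (simp add: is_ideal_mult[OF ideal_J])
        then show "h \<in> colon J (x * g)"
          unfolding colon_def by (simp add: ac_simps)
      qed
      ultimately have "colon J (x * g) = Q"
        using max is_ideal_colon[OF ideal_J] unfolding Q by blast
      have "y * (x * g) \<in> J"
        using xy unfolding Q colon_def by (simp add: ac_simps)
      then show ?thesis
        using \<open>colon J (x * g) = Q\<close> unfolding colon_def by blast
    qed simp
  qed
  then show thesis
    using that g(1) unfolding Ass_def Q by blast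
qed

lemma v_number_le:
  "g \<in> homog_comp_set d \<Longrightarrow> colon J g \<in> Ass J \<Longrightarrow> v_number J \<le> d"
  unfolding v_number_def by (rule Least_le) blast

lemma v_number_attained:
  fixes J :: "('v::finite, 'k::field) mpoly set"
  assumes "graded_ideal J" and "1 \<notin> J"
  obtains g where "g \<in> homog_comp_set (v_number J)" and "colon J g \<in> Ass J"
proof -
  obtain e g where "g \<in> homog_comp_set e" "colon J g \<in> Ass J"
    using ex_homogeneous_Ass[OF assms] .
  then have "\<exists>g \<in> homog_comp_set e. colon J g \<in> Ass J"
    by blast
  then have "\<exists>g \<in> homog_comp_set (v_number J). colon J g \<in> Ass J"
    unfolding v_number_def by (rule LeastI)
  then show thesis
    using that by blast
qed

theorem proposition4p3:
  fixes I :: "('v::finite, 'k::field) mpoly set"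
    and f :: "('v, 'k) mpoly" and d :: nat
  assumes "graded_ideal I" and "I \<noteq> UNIV"
    and "f \<in> homog_comp_set d" and "f \<notin> I"
  shows "v_number I \<le> v_number (colon I f) + d"
proof -
  have "graded_ideal (colon I f)"
    using assms(1,3) by (rule graded_ideal_colon)
  moreover have "1 \<notin> colon I f"
    using assms(4) by (simp add: colon_def)
  ultimately obtain h where h: "h \<in> homog_comp_set (v_number (colon I f))"
    and "colon (colon I f) h \<in> Ass (colon I f)"
    by (rule v_number_attained)
  then have "colon I (h * f) \<in> Ass I"
    using Ass_colon_subset by (auto simp: colon_colon)
  moreover have "h * f \<in> homog_comp_set (v_number (colon I f) + d)"
    using h assms(3) by (rule homog_comp_set_mult)
  ultimately show ?thesis
    by (rule v_number_le[rotated])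
qed

end
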